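(* Let $n\ge 3$ and for $p>0$ define $$\|M_{S_n}\|_p^{*}:=\sup_{y\ge 1}\left(\frac{y^p+(n-1)\left(\frac{1+y}{2}\right)^p}{y^p+(n-1)}\right)^{1/p}.$$ Then $$\lim_{p\to\infty}\left(\|M_{S_n}\|_p^{*}\right)^p=\frac{1+\sqrt{n}}{2}.$$ *)

theory Defs
  imports "HOL-Analysis.Analysis"
begin

definition MSn_norm :: "nat \<Rightarrow> real \<Rightarrow> real" where
  "MSn_norm n p = (SUP y\<in>{1..}. ((y powr p + (real n - 1) * ((1 + y) / 2) powr p)
                                  / (y powr p + (real n - 1))) powr (1 / p))"

end

theory Submission
  imports Defs "HOL-Probability.Hoeffding" "HOL-Real_Asymp.Real_Asymp"
begin

(* Let r = sqrt n, N = r^2 - 1 = n - 1 and let F_p(y) be the ratio under the supremum.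
   Lower bound: at y = T^(1/p) with T = (1 + r)^2 one has F_p(y) -> (T + N sqrt T) / (T + N) = (1 + r) / 2.
   Upper bound: with s = y^(p/2), Hoeffding's bound cosh t <= exp (t^2 / 2) gives
   ((1 + y) / 2)^p <= s exp (p (ln y)^2 / 8), and s^2 + N s <= (1 + r) / 2 (s^2 + N) for all s, so
   F_p(y) <= (1 + r) / 2 exp (p (ln y)^2 / 8), which is close to (1 + r) / 2 while p ln y stays bounded.
   Once p ln y is large, the cruder bound F_p(y) <= 1 + N ((1 + y) / (2 y))^p is at most (1 + r) / 2
   for y near 1 and tends to 1 uniformly for y >= 2. *)

definition mean_power_ratio :: "real \<Rightarrow> real \<Rightarrow> real \<Rightarrow> real" where
  "mean_power_ratio N p y = (y powr p + N * ((1 + y) / 2) powr p) / (y powr p + N)"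

(* Hoeffding's lemma for a fair coin: cosh t <= exp (t^2 / 2), with t = ln y / 2. *)
lemma mean_le_sqrt_mult_exp_ln_sq:
  fixes y :: real
  assumes "y \<ge> 1"
  shows "(1 + y) / 2 \<le> sqrt y * exp ((ln y)\<^sup>2 / 8)"
proof -
  have "- ln y * (1 / 2) + ln (1 + (1 / 2) * (exp (ln y) - 1)) \<le> (ln y)\<^sup>2 / 8"
    using Hoeffdings_lemma_aux[of "ln y" "1 / 2"] assms by simp
  then have "ln ((1 + y) / 2) \<le> ln (sqrt y * exp ((ln y)\<^sup>2 / 8))"
    using assms by (simp add: ln_mult ln_sqrt field_simps)
  then show ?thesis
    using assms by (subst (asm) ln_le_cancel_iff) auto
qed

(* Equality holds at s = r + 1, so (1 + r) / 2 is the supremum of (s^2 + N s) / (s^2 + N). *)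
lemma sq_add_mult_le_half_mult:
  fixes r s :: real
  assumes "r \<ge> 1"
  shows "s\<^sup>2 + (r\<^sup>2 - 1) * s \<le> (1 + r) / 2 * (s\<^sup>2 + (r\<^sup>2 - 1))"
proof -
  have "(1 + r) / 2 * (s\<^sup>2 + (r\<^sup>2 - 1)) - (s\<^sup>2 + (r\<^sup>2 - 1) * s) = (r - 1) / 2 * (s - (r + 1))\<^sup>2"
    by (simp add: power2_eq_square field_simps)
  moreover have "(r - 1) / 2 * (s - (r + 1))\<^sup>2 \<ge> 0"
    using assms by simp
  ultimately show ?thesis
    by linarith
qed

lemma mean_power_ratio_le_exp:
  fixes r y p :: real
  assumes "r \<ge> 1" "y \<ge> 1" "p \<ge> 0"
  shows "mean_power_ratio (r\<^sup>2 - 1) p y \<le> (1 + r) / 2 * exp (p * (ln y)\<^sup>2 / 8)"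
proof -
  define N where "N = r\<^sup>2 - 1"
  define s where "s = y powr (p / 2)"
  define E where "E = exp (p * (ln y)\<^sup>2 / 8)"
  have N: "N \<ge> 0" "s\<^sup>2 + N * s \<le> (1 + r) / 2 * (s\<^sup>2 + N)"
    using assms sq_add_mult_le_half_mult unfolding N_def by auto
  have s: "s > 0" "s\<^sup>2 = y powr p"
    using assms unfolding s_def by (auto simp: powr_powr[symmetric] powr_add[symmetric] power2_eq_square)
  have E: "E \<ge> 1"
    using assms unfolding E_def by simp
  have "((1 + y) / 2) powr p \<le> (sqrt y * exp ((ln y)\<^sup>2 / 8)) powr p"
    using assms mean_le_sqrt_mult_exp_ln_sq by (intro powr_mono2) auto
  also have "\<dots> = s * E"
    using assms unfolding s_def E_def
    by (simp add: powr_half_sqrt[symmetric] powr_def algebra_simps flip: exp_add)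
  finally have B: "((1 + y) / 2) powr p \<le> s * E" .
  have "mean_power_ratio N p y \<le> (s\<^sup>2 + N * (s * E)) / (s\<^sup>2 + N)"
    unfolding mean_power_ratio_def s(2)[symmetric]
    using B N s by (intro divide_right_mono add_left_mono mult_left_mono) auto
  also have "\<dots> \<le> E * (s\<^sup>2 + N * s) / (s\<^sup>2 + N)"
    using mult_right_mono[OF E, of "s\<^sup>2"] N s
    by (intro divide_right_mono) (auto simp: algebra_simps)
  also have "\<dots> \<le> E * ((1 + r) / 2)"
  proof -
    have "(s\<^sup>2 + N * s) / (s\<^sup>2 + N) \<le> (1 + r) / 2"
      using N s(1) by (subst pos_divide_le_eq) (auto intro: add_pos_nonneg simp: mult.commute)
    then show ?thesis
      using E by (simp flip: times_divide_eq_right)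
  qed
  finally show ?thesis
    unfolding N_def E_def by (simp add: mult.commute)
qed

lemma mean_power_ratio_le_one_add:
  fixes N y p :: real
  assumes "N \<ge> 0" "y > 0"
  shows "mean_power_ratio N p y \<le> 1 + N * ((1 + y) / (2 * y)) powr p"
proof -
  have "mean_power_ratio N p y \<le> (y powr p + N * ((1 + y) / 2) powr p) / y powr p"
    unfolding mean_power_ratio_def using assms
    by (intro divide_left_mono) (auto intro!: mult_pos_pos add_pos_nonneg)
  also have "\<dots> = 1 + N * (((1 + y) / 2) powr p / y powr p)"
    using assms by (simp add: field_simps)
  also have "((1 + y) / 2) powr p / y powr p = ((1 + y) / (2 * y)) powr p"
    using assms by (subst powr_divide[symmetric]) (auto simp: field_simps)
  finally show ?thesis .
qed

lemma half_succ_div_le_powr: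
  fixes y :: real
  assumes "1 \<le> y" "y \<le> exp 1"
  shows "(1 + y) / (2 * y) \<le> y powr (- 3 / 8)"
proof -
  define u where "u = ln y"
  have u: "0 \<le> u" "u \<le> 1" "exp u = y"
    using assms ln_le_cancel_iff[of y "exp 1"] unfolding u_def by auto
  have "u\<^sup>2 \<le> u"
    using u by (simp add: power2_eq_square mult_left_le)
  have "(1 + y) / (2 * y) \<le> sqrt y * exp (u\<^sup>2 / 8) / y"
    using mean_le_sqrt_mult_exp_ln_sq[OF assms(1)] assms unfolding u_def
    by (simp add: divide_right_mono flip: divide_divide_eq_left)
  also have "\<dots> = exp (u\<^sup>2 / 8 - u / 2)"
    using u by (simp flip: u(3) exp_diff exp_add add: real_sqrt_unique[of "exp (u / 2)"]
        power2_eq_square)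
  also have "\<dots> \<le> exp (- 3 / 8 * u)"
    using \<open>u\<^sup>2 \<le> u\<close> by simp
  also have "\<dots> = y powr (- 3 / 8)"
    using assms unfolding u_def by (simp add: powr_def)
  finally show ?thesis .
qed

(* c is chosen so that exp (- 3 c / 8) = 1 / (2 (1 + r)), i.e. (r^2 - 1) exp (- 3 c / 8) = (r + 1) / 2 - 1. *)
lemma mean_power_ratio_le_max:
  fixes r p y :: real
  assumes "r > 1" "p > 0" "y \<ge> 1"
  defines "c \<equiv> 8 / 3 * ln (2 * (1 + r))"
  shows "mean_power_ratio (r\<^sup>2 - 1) p y
           \<le> max ((1 + r) / 2 * exp (c\<^sup>2 / (8 * p))) (1 + (r\<^sup>2 - 1) * (3 / 4) powr p)"
proof -
  define N where "N = r\<^sup>2 - 1"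
  have N: "N \<ge> 0"
    using assms unfolding N_def by simp
  have one_add: "mean_power_ratio N p y \<le> 1 + N * q"
    if "((1 + y) / (2 * y)) powr p \<le> q" for q
    using mean_power_ratio_le_one_add[OF N, of y p] mult_left_mono[OF that N] assms by simp
  consider "y \<ge> 2" | "y < 2" "p * ln y \<le> c" | "y < 2" "p * ln y > c"
    by linarith
  then show ?thesis
  proof cases
    case 1
    have "(1 + y) / (2 * y) \<le> 3 / 4"
      using 1 by (simp add: field_simps)
    then have "mean_power_ratio N p y \<le> 1 + N * (3 / 4) powr p"
      using assms by (intro one_add powr_mono2) auto
    then show ?thesis
      unfolding N_def by simp
  next
    case 2
    have "(p * ln y)\<^sup>2 \<le> c\<^sup>2"
      using 2 assms by (intro power_mono) auto
    then have "p * (ln y)\<^sup>2 / 8 \<le> c\<^sup>2 / (8 * p)"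
      using assms by (simp add: field_simps power2_eq_square)
    then have "(1 + r) / 2 * exp (p * (ln y)\<^sup>2 / 8) \<le> (1 + r) / 2 * exp (c\<^sup>2 / (8 * p))"
      using assms by simp
    then have "mean_power_ratio N p y \<le> (1 + r) / 2 * exp (c\<^sup>2 / (8 * p))"
      using mean_power_ratio_le_exp[of r y p] assms unfolding N_def by linarith
    then show ?thesis
      unfolding N_def by simp
  next
    case 3
    have "y \<le> exp 1"
      using 3 exp_ge_add_one_self[of 1] by linarith
    then have "((1 + y) / (2 * y)) powr p \<le> (y powr (- 3 / 8)) powr p"
      using assms half_succ_div_le_powr by (intro powr_mono2) auto
    also have "\<dots> = exp (- 3 / 8 * (p * ln y))"
      using assms by (simp add: powr_powr powr_def)
    also have "\<dots> \<le> exp (- 3 / 8 * c)"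
      using 3 by simp
    also have "\<dots> = 1 / (2 * (1 + r))"
      using assms unfolding c_def by (simp add: exp_minus inverse_eq_divide)
    finally have "mean_power_ratio N p y \<le> 1 + N * (1 / (2 * (1 + r)))"
      by (rule one_add)
    also have "\<dots> = (1 + r) / 2"
      using assms unfolding N_def by (simp add: field_simps power2_eq_square)
    also have "\<dots> \<le> (1 + r) / 2 * exp (c\<^sup>2 / (8 * p))"
      using mult_left_mono[OF one_le_exp_iff[THEN iffD2], of "c\<^sup>2 / (8 * p)" "(1 + r) / 2"] assms
      by simp
    finally show ?thesis
      unfolding N_def by simp
  qed
qed

lemma tendsto_half_succ_root_powr:
  fixes T :: real
  assumes "T > 0"
  shows "((\<lambda>p. ((1 + T powr (1 / p)) / 2) powr p) \<longlongrightarrow> sqrt T) at_top"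
proof -
  have "((\<lambda>p. ((1 + T powr (1 / p)) / 2) powr p) \<longlongrightarrow> exp (ln T / 2)) at_top"
    using assms by real_asymp
  then show ?thesis
    using assms by (simp add: powr_half_sqrt[symmetric] powr_def)
qed

lemma tendsto_mean_power_ratio_root:
  fixes T N :: real
  assumes "T > 0" "N \<ge> 0"
  shows "((\<lambda>p. mean_power_ratio N p (T powr (1 / p))) \<longlongrightarrow> (T + N * sqrt T) / (T + N)) at_top"
proof -
  have "((\<lambda>p. (T + N * ((1 + T powr (1 / p)) / 2) powr p) / (T + N))
          \<longlongrightarrow> (T + N * sqrt T) / (T + N)) at_top"
    using assms by (intro tendsto_intros tendsto_half_succ_root_powr) auto
  moreover have "\<forall>\<^sub>F p in at_top.
      (T + N * ((1 + T powr (1 / p)) / 2) powr p) / (T + N) = mean_power_ratio N p (T powr (1 / p))"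
    using eventually_gt_at_top[of "0 :: real"]
    by eventually_elim (use assms in \<open>simp add: mean_power_ratio_def powr_powr\<close>)
  ultimately show ?thesis
    by (rule Lim_transform_eventually)
qed

lemma SUP_root_powr_between:
  fixes f :: "'a \<Rightarrow> real"
  assumes "p > 0" "x \<in> S" "\<And>y. y \<in> S \<Longrightarrow> 0 \<le> f y \<and> f y \<le> U"
  shows "f x \<le> (SUP y\<in>S. f y powr (1 / p)) powr p"
    and "(SUP y\<in>S. f y powr (1 / p)) powr p \<le> U"
proof -
  let ?S = "SUP y\<in>S. f y powr (1 / p)"
  have "bdd_above ((\<lambda>y. f y powr (1 / p)) ` S)"
    using assms by (intro bdd_aboveI2[of _ _ "U powr (1 / p)"] powr_mono2) auto
  then have x: "f x powr (1 / p) \<le> ?S"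
    using assms(2) by (rule cSUP_upper2) simp
  then have "(f x powr (1 / p)) powr p \<le> ?S powr p"
    using assms by (intro powr_mono2) auto
  then show "f x \<le> ?S powr p"
    using assms by (simp add: powr_powr)
  have "?S \<le> U powr (1 / p)"
    using assms by (intro cSUP_least powr_mono2) auto
  moreover have "0 \<le> ?S"
    using x powr_ge_zero[of "f x" "1 / p"] by linarith
  ultimately have "?S powr p \<le> (U powr (1 / p)) powr p"
    using assms by (intro powr_mono2) auto
  also have "\<dots> = U"
    using assms(1) assms(3)[OF assms(2)] by (simp add: powr_powr)
  finally show "?S powr p \<le> U" .
qed

theorem tendsto_SUP_mean_power_ratio:
  fixes r :: real
  assumes "r > 1"
  shows "((\<lambda>p. (SUP y\<in>{1..}. mean_power_ratio (r\<^sup>2 - 1) p y powr (1 / p)) powr p)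
           \<longlongrightarrow> (1 + r) / 2) at_top"
proof -
  define N where "N = r\<^sup>2 - 1"
  define c where "c = 8 / 3 * ln (2 * (1 + r))"
  define U where "U = (\<lambda>p. max ((1 + r) / 2 * exp (c\<^sup>2 / (8 * p))) (1 + N * (3 / 4) powr p))"
  define T where "T = (1 + r)\<^sup>2"
  define S where "S = (\<lambda>p. (SUP y\<in>{1..}. mean_power_ratio N p y powr (1 / p)) powr p)"
  have N: "N \<ge> 0"
    using assms unfolding N_def by simp
  have T: "T \<ge> 1"
    using assms unfolding T_def by simp
  have ratio_bounds: "0 \<le> mean_power_ratio N p y \<and> mean_power_ratio N p y \<le> U p"
    if "p > 0" "y \<in> {1..}" for p y
    using that assms N mean_power_ratio_le_max[of r p y]
    unfolding U_def N_def c_def by (auto simp: mean_power_ratio_def)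
  have root_ge_one: "T powr (1 / p) \<in> {1..}" if "p > 0" for p
    using that T by (simp add: ge_one_powr_ge_zero)
  have S_bounds: "mean_power_ratio N p (T powr (1 / p)) \<le> S p \<and> S p \<le> U p" if "p > 0" for p
    using SUP_root_powr_between[OF that root_ge_one[OF that] ratio_bounds[OF that]]
    unfolding S_def by simp
  have "((\<lambda>p. mean_power_ratio N p (T powr (1 / p))) \<longlongrightarrow> (T + N * sqrt T) / (T + N)) at_top"
    using T N by (intro tendsto_mean_power_ratio_root) auto
  moreover have "(T + N * sqrt T) / (T + N) = (1 + r) / 2"
  proof -
    have "sqrt T = 1 + r"
      using assms unfolding T_def by simp
    then have "T + N * sqrt T = (1 + r) / 2 * (T + N)"
      unfolding T_def N_def by (simp add: power2_eq_square field_simps)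
    moreover have "T + N > 0"
      using T N by simp
    ultimately show ?thesis
      by simp
  qed
  ultimately have lower: "((\<lambda>p. mean_power_ratio N p (T powr (1 / p))) \<longlongrightarrow> (1 + r) / 2) at_top"
    by simp
  have "(U \<longlongrightarrow> max ((1 + r) / 2 * 1) (1 + N * 0)) at_top"
    unfolding U_def by (intro tendsto_intros) real_asymp+
  then have upper: "(U \<longlongrightarrow> (1 + r) / 2) at_top"
    using assms by simp
  have "\<forall>\<^sub>F p in at_top. mean_power_ratio N p (T powr (1 / p)) \<le> S p"
       "\<forall>\<^sub>F p in at_top. S p \<le> U p"
    using S_bounds by (auto intro: eventually_mono[OF eventually_gt_at_top[of 0]])
  then have "(S \<longlongrightarrow> (1 + r) / 2) at_top"
    using lower upper by (rule tendsto_sandwich)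
  then show ?thesis
    unfolding S_def N_def .
qed

theorem lemma3p5:
  fixes n :: nat
  assumes "n \<ge> 3"
  shows "((\<lambda>p. (MSn_norm n p) powr p) \<longlongrightarrow> (1 + sqrt (real n)) / 2) at_top"
proof -
  have "MSn_norm n = (\<lambda>p. (SUP y\<in>{1..}. mean_power_ratio (real n - 1) p y powr (1 / p)))"
    by (simp add: fun_eq_iff MSn_norm_def mean_power_ratio_def)
  moreover have "sqrt (real n) > 1"
    using assms by simp
  ultimately show ?thesis
    using tendsto_SUP_mean_power_ratio[of "sqrt (real n)"] by simp
qed

end
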